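(* Let $\mathcal{C}$ be a Cayley algebra over an arbitrary field $\mathbb{F}$ with norm $\mathrm{n}$, and let $\mathrm{O}(\mathcal{C},\mathrm{n})$ be the orthogonal group of $(\mathcal{C},\mathrm{n})$. Then the set $\mathrm{LocAut}(\mathcal{C})$ of local automorphisms of $\mathcal{C}$ coincides with $\{\varphi\in\mathrm{O}(\mathcal{C},\mathrm{n})\mid \varphi(1)=1\}$.
   Context: A Cayley (octonion) algebra over $\mathbb{F}$ is a unital nonassociative algebra $\mathcal{C}$ of dimension $8$ over $\mathbb{F}$ endowed with a quadratic form $\mathrm{n}:\mathcal{C}\to\mathbb{F}$ (the norm) such that $\mathrm{n}(xy)=\mathrm{n}(x)\mathrm{n}(y)$ for all $x,y$ and whose polar form $\mathrm{n}(x,y)=\mathrm{n}(x+y)-\mathrm{n}(x)-\mathrm{n}(y)$ is a nondegenerate bilinear form. $\mathrm{O}(\mathcal{C},\mathrm{n})$ is the group of linear bijections $\varphi$ of $\mathcal{C}$ with $\mathrm{n}(\varphi(x))=\mathrm{n}(x)$ for all $x$. A linear map $\psi:\mathcal{C}\to\mathcal{C}$ is a local automorphism if for every $x\in\mathcal{C}$ there is an algebra automorphism $\varphi_x$ of $\mathcal{C}$ (depending on $x$) with $\psi(x)=\varphi_x(x)$. *)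

theory Defs
  imports Complex_Main
begin

text \<open>An algebra over a field 'a is modelled on the whole type 'v, a vector space
  via the scalar multiplication sc; mult is the algebra product, e its unit.\<close>

definition bilinear_map :: "('a::field \<Rightarrow> 'v::ab_group_add \<Rightarrow> 'v) \<Rightarrow> ('v \<Rightarrow> 'v \<Rightarrow> 'w::ab_group_add) \<Rightarrow> ('a \<Rightarrow> 'w \<Rightarrow> 'w) \<Rightarrow> bool" where
  "bilinear_map sc m scw \<longleftrightarrow>
     (\<forall>x. Vector_Spaces.linear sc scw (\<lambda>y. m x y)) \<and>
     (\<forall>y. Vector_Spaces.linear sc scw (\<lambda>x. m x y))"

definition polar :: "('v::ab_group_add \<Rightarrow> 'a::field) \<Rightarrow> 'v \<Rightarrow> 'v \<Rightarrow> 'a" where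
  "polar n x y = n (x + y) - n x - n y"

definition quadratic_form :: "('a::field \<Rightarrow> 'v::ab_group_add \<Rightarrow> 'v) \<Rightarrow> ('v \<Rightarrow> 'a) \<Rightarrow> bool" where
  "quadratic_form sc n \<longleftrightarrow>
     (\<forall>c x. n (sc c x) = c * c * n x) \<and> bilinear_map sc (polar n) (*)"

definition cayley_algebra ::
  "('a::field \<Rightarrow> 'v::ab_group_add \<Rightarrow> 'v) \<Rightarrow> ('v \<Rightarrow> 'v \<Rightarrow> 'v) \<Rightarrow> 'v \<Rightarrow> ('v \<Rightarrow> 'a) \<Rightarrow> bool" where
  "cayley_algebra sc mult e n \<longleftrightarrow>
     vector_space sc \<and>
     vector_space.dim sc (UNIV :: 'v set) = 8 \<and>
     bilinear_map sc mult sc \<and>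
     (\<forall>x. mult e x = x \<and> mult x e = x) \<and>
     quadratic_form sc n \<and>
     (\<forall>x y. n (mult x y) = n x * n y) \<and>
     (\<forall>x. (\<forall>y. polar n x y = 0) \<longrightarrow> x = 0)"

definition algebra_aut :: "('a::field \<Rightarrow> 'v::ab_group_add \<Rightarrow> 'v) \<Rightarrow> ('v \<Rightarrow> 'v \<Rightarrow> 'v) \<Rightarrow> ('v \<Rightarrow> 'v) \<Rightarrow> bool" where
  "algebra_aut sc mult \<phi> \<longleftrightarrow>
     Vector_Spaces.linear sc sc \<phi> \<and> bij \<phi> \<and> (\<forall>x y. \<phi> (mult x y) = mult (\<phi> x) (\<phi> y))"

definition local_aut :: "('a::field \<Rightarrow> 'v::ab_group_add \<Rightarrow> 'v) \<Rightarrow> ('v \<Rightarrow> 'v \<Rightarrow> 'v) \<Rightarrow> ('v \<Rightarrow> 'v) \<Rightarrow> bool" where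
  "local_aut sc mult \<psi> \<longleftrightarrow>
     Vector_Spaces.linear sc sc \<psi> \<and> (\<forall>x. \<exists>\<phi>. algebra_aut sc mult \<phi> \<and> \<psi> x = \<phi> x)"

definition orthogonal_group :: "('a::field \<Rightarrow> 'v::ab_group_add \<Rightarrow> 'v) \<Rightarrow> ('v \<Rightarrow> 'a) \<Rightarrow> ('v \<Rightarrow> 'v) set" where
  "orthogonal_group sc n =
     {\<phi>. Vector_Spaces.linear sc sc \<phi> \<and> bij \<phi> \<and> (\<forall>x. n (\<phi> x) = n x)}"

end

theory Submission
  imports Defs
begin

text \<open>An automorphism fixes \<open>e\<close>, and applying it to the quadratic equation
  \<open>x \<odot> x = tr x *s x - n x *s e\<close> shows that it preserves the norm; since the norm is
  nondegenerate, a local automorphism is thus a norm-preserving linear bijection fixing \<open>e\<close>.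
  Conversely let \<open>g\<close> be orthogonal with \<open>g e = e\<close>, and let \<open>x\<close> be no multiple of \<open>e\<close>.
  Then \<open>x\<close> lies in the span of \<open>e, u, v\<close>, where \<open>e, u\<close> span a nondegenerate
  two-dimensional subalgebra \<open>K\<close> and \<open>v \<perp> K\<close> is anisotropic.  As \<open>g\<close> preserves trace and
  norm, \<open>u \<mapsto> g u\<close> is an isomorphism of \<open>K\<close> onto \<open>K' = span {e, g u}\<close>; Cayley--Dickson
  doubling extends it to \<open>Q = K \<oplus> K v \<cong> K' \<oplus> K' (g v)\<close> with \<open>v \<mapsto> g v\<close>, and once more to
  \<open>Q \<oplus> Q w\<close>, the whole algebra, for an anisotropic \<open>w \<perp> Q\<close> chosen with \<open>g w \<perp> g u \<odot> g v\<close>.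
  The resulting automorphism agrees with \<open>g\<close> on \<open>e, u, v\<close>, hence on \<open>x\<close>.\<close>

section \<open>Composition algebras\<close>

locale composition_algebra = vs: vector_space sc
  for sc :: "'a::field \<Rightarrow> 'v::ab_group_add \<Rightarrow> 'v" (infixr "*s" 75) +
  fixes mult :: "'v \<Rightarrow> 'v \<Rightarrow> 'v" (infixl "\<odot>" 70)
    and e :: 'v and n :: "'v \<Rightarrow> 'a"
  assumes bilinear_mult: "bilinear_map sc mult sc"
    and mult_unit_left [simp]: "e \<odot> x = x"
    and mult_unit_right [simp]: "x \<odot> e = x"
    and quadratic_form_n: "quadratic_form sc n"
    and n_mult: "n (x \<odot> y) = n x * n y"
    and polar_nondegenerate: "(\<And>y. polar n x y = 0) \<Longrightarrow> x = 0"
    and unit_nonzero: "e \<noteq> 0"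
begin

abbreviation p :: "'v \<Rightarrow> 'v \<Rightarrow> 'a" where "p \<equiv> polar n"

lemma linear_mult_right: "Vector_Spaces.linear sc sc (\<lambda>x. x \<odot> y)"
  using bilinear_mult by (simp add: bilinear_map_def)

lemma mult_add_right: "x \<odot> (y + z) = x \<odot> y + x \<odot> z"
  and mult_scale_right: "x \<odot> (c *s y) = c *s (x \<odot> y)"
  and mult_add_left: "(x + y) \<odot> z = x \<odot> z + y \<odot> z"
  and mult_scale_left: "(c *s x) \<odot> z = c *s (x \<odot> z)"
  using bilinear_mult unfolding bilinear_map_def Vector_Spaces.linear_iff by blast+

lemma mult_zero_right [simp]: "x \<odot> 0 = 0"
  and mult_minus_right: "x \<odot> (- y) = - (x \<odot> y)"
  and mult_diff_right: "x \<odot> (y - z) = x \<odot> y - x \<odot> z"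
proof -
  interpret additive "\<lambda>y. x \<odot> y" by standard (rule mult_add_right)
  show "x \<odot> 0 = 0" "x \<odot> (- y) = - (x \<odot> y)" "x \<odot> (y - z) = x \<odot> y - x \<odot> z"
    by (fact zero minus diff)+
qed

lemma mult_zero_left [simp]: "0 \<odot> x = 0"
  and mult_minus_left: "(- y) \<odot> x = - (y \<odot> x)"
  and mult_diff_left: "(y - z) \<odot> x = y \<odot> x - z \<odot> x"
proof -
  interpret additive "\<lambda>y. y \<odot> x" by standard (rule mult_add_left)
  show "0 \<odot> x = 0" "(- y) \<odot> x = - (y \<odot> x)" "(y - z) \<odot> x = y \<odot> x - z \<odot> x"
    by (fact zero minus diff)+
qed

lemma n_scale: "n (c *s x) = c * c * n x"
  using quadratic_form_n by (simp add: quadratic_form_def)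

lemma polar_add_right: "p x (y + z) = p x y + p x z"
  and polar_scale_right: "p x (c *s y) = c * p x y"
  and polar_add_left: "p (x + y) z = p x z + p y z"
  and polar_scale_left: "p (c *s x) z = c * p x z"
  using quadratic_form_n
  unfolding quadratic_form_def bilinear_map_def Vector_Spaces.linear_iff by blast+

lemma polar_zero_right [simp]: "p x 0 = 0"
  and polar_minus_right: "p x (- y) = - p x y"
  and polar_diff_right: "p x (y - z) = p x y - p x z"
proof -
  interpret additive "\<lambda>y. p x y" by standard (rule polar_add_right)
  show "p x 0 = 0" "p x (- y) = - p x y" "p x (y - z) = p x y - p x z"
    by (fact zero minus diff)+
qed

lemma polar_zero_left [simp]: "p 0 x = 0"
  and polar_minus_left: "p (- y) x = - p y x"
  and polar_diff_left: "p (y - z) x = p y x - p z x"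
proof -
  interpret additive "\<lambda>y. p y x" by standard (rule polar_add_left)
  show "p 0 x = 0" "p (- y) x = - p y x" "p (y - z) x = p y x - p z x"
    by (fact zero minus diff)+
qed

lemmas bilinear_simps =
  mult_add_right mult_scale_right mult_add_left mult_scale_left
  mult_minus_right mult_diff_right mult_minus_left mult_diff_left
  polar_add_right polar_scale_right polar_add_left polar_scale_left
  polar_minus_right polar_diff_right polar_minus_left polar_diff_left
  vs.scale_right_distrib vs.scale_left_distrib vs.scale_right_diff_distrib vs.scale_left_diff_distrib

lemma polar_commute: "p x y = p y x"
  by (simp add: polar_def algebra_simps)

lemma n_add: "n (x + y) = n x + n y + p x y"
  by (simp add: polar_def)

lemma n_zero [simp]: "n 0 = 0"
  using n_scale[of 0 0] by simp

lemma n_minus [simp]: "n (- x) = n x"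
  using n_scale[of "-1" x] by simp

lemma n_diff: "n (x - y) = n x + n y - p x y"
  using n_add[of x "- y"] by (simp add: polar_minus_right)

lemma polar_self: "p x x = 2 * n x"
proof -
  have "x + x = 2 *s x"
    by (metis one_add_one vs.scale_left_distrib vs.scale_one)
  then show ?thesis using n_add[of x x] n_scale[of 2 x] by simp
qed

lemma polar_eqI: "(\<And>z. p x z = p y z) \<Longrightarrow> x = y"
  using polar_nondegenerate[of "x - y"] by (simp add: polar_diff_left)

lemma exists_polar_dual:
  assumes "a \<noteq> 0" and "\<forall>c. b \<noteq> c *s a"
  obtains z where "p z a = 0" "p z b = 1"
proof -
  obtain q where q: "p q a \<noteq> 0" using polar_nondegenerate assms(1) polar_commute by metis
  define q1 where "q1 = (1 / p q a) *s q"
  have q1: "p q1 a = 1" using q by (simp add: q1_def bilinear_simps)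
  have "b - p q1 b *s a \<noteq> 0" using assms(2) by auto
  then obtain r where r: "p r (b - p q1 b *s a) \<noteq> 0" using polar_nondegenerate polar_commute by metis
  define r' where "r' = r - p r a *s q1"
  have "p r' a = 0" using q1 by (simp add: r'_def bilinear_simps)
  moreover have "p r' b \<noteq> 0" using r by (simp add: r'_def bilinear_simps algebra_simps)
  ultimately show ?thesis using that[of "(1 / p r' b) *s r'"] by (simp add: bilinear_simps)
qed

lemma n_unit [simp]: "n e = 1"
proof (rule ccontr)
  assume "n e \<noteq> 1"
  moreover have "n e = n e * n e" using n_mult[of e e] by simp
  ultimately have "n e = 0" by (metis mult_cancel_right1 mult_eq_0_iff)
  then have "n x = 0" for x using n_mult[of x e] by simp
  then have "p e y = 0" for y by (simp add: polar_def)
  then show False using polar_nondegenerate unit_nonzero by blast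
qed

definition tr :: "'v \<Rightarrow> 'a" where "tr x = p x e"

definition cnj :: "'v \<Rightarrow> 'v" where "cnj x = tr x *s e - x"

lemma tr_unit [simp]: "tr e = 2" by (simp add: tr_def polar_self)
lemma tr_add: "tr (x + y) = tr x + tr y" by (simp add: tr_def bilinear_simps)
lemma tr_scale: "tr (c *s x) = c * tr x" by (simp add: tr_def bilinear_simps)
lemma tr_diff: "tr (x - y) = tr x - tr y" by (simp add: tr_def bilinear_simps)

lemma n_diff_scale_unit: "n (x - c *s e) = n x + c * c - c * tr x"
  by (simp add: n_diff n_scale tr_def polar_scale_right)

lemma polar_mult_left: "p (x \<odot> y) (x \<odot> z) = n x * p y z"
proof -
  have "n (x \<odot> (y + z)) = n x * n (y + z)" by (rule n_mult)
  then show ?thesis by (simp add: bilinear_simps n_add n_mult algebra_simps)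
qed

lemma polar_mult_right: "p (x \<odot> z) (y \<odot> z) = p x y * n z"
proof -
  have "n ((x + y) \<odot> z) = n (x + y) * n z" by (rule n_mult)
  then show ?thesis by (simp add: bilinear_simps n_add n_mult algebra_simps)
qed

lemma polar_mult_exchange: "p (x \<odot> y) (w \<odot> z) + p (w \<odot> y) (x \<odot> z) = p x w * p y z"
proof -
  have "p ((x + w) \<odot> y) ((x + w) \<odot> z) = n (x + w) * p y z" by (rule polar_mult_left)
  moreover have "p ((x + w) \<odot> y) ((x + w) \<odot> z)
      = n x * p y z + p (x \<odot> y) (w \<odot> z) + p (w \<odot> y) (x \<odot> z) + n w * p y z"
    by (simp add: bilinear_simps polar_mult_left)
  ultimately show ?thesis by (simp add: n_add algebra_simps polar_commute[of x w])
qed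

lemma cnj_mult_left_expand: "cnj x \<odot> z = tr x *s z - x \<odot> z"
  by (simp add: cnj_def bilinear_simps)

lemma cnj_mult_right_expand: "z \<odot> cnj x = tr x *s z - z \<odot> x"
  by (simp add: cnj_def bilinear_simps)

lemma polar_mult_adjoint_left: "p (x \<odot> y) z = p y (cnj x \<odot> z)"
proof -
  have "p (x \<odot> y) (e \<odot> z) + p (e \<odot> y) (x \<odot> z) = p x e * p y z" by (rule polar_mult_exchange)
  then show ?thesis by (simp add: cnj_mult_left_expand bilinear_simps tr_def eq_diff_eq)
qed

lemma polar_mult_adjoint_right: "p (x \<odot> y) z = p x (z \<odot> cnj y)"
proof -
  have "p (x \<odot> y) (z \<odot> e) + p (z \<odot> y) (x \<odot> e) = p x z * p y e" by (rule polar_mult_exchange)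
  then show ?thesis
    by (simp add: cnj_mult_right_expand bilinear_simps tr_def polar_commute[of "z \<odot> y"]
        mult.commute eq_diff_eq)
qed

lemma tr_cnj [simp]: "tr (cnj x) = tr x"
  by (simp add: cnj_def tr_diff tr_scale)

lemma cnj_cnj [simp]: "cnj (cnj x) = x"
  by (simp add: cnj_def[of "cnj x"]) (simp add: cnj_def)

lemma cnj_add: "cnj (x + y) = cnj x + cnj y"
  by (simp add: cnj_def tr_add bilinear_simps)

lemma cnj_minus: "cnj (- x) = - cnj x"
  by (simp add: cnj_def tr_def bilinear_simps)

lemma cnj_mult_cancel_left: "cnj x \<odot> (x \<odot> y) = n x *s y"
proof (rule polar_eqI)
  fix z
  have "p (cnj x \<odot> (x \<odot> y)) z = p (x \<odot> y) (x \<odot> z)"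
    using polar_mult_adjoint_left[of "cnj x"] by simp
  also have "\<dots> = n x * p y z" by (rule polar_mult_left)
  finally show "p (cnj x \<odot> (x \<odot> y)) z = p (n x *s y) z" by (simp add: bilinear_simps)
qed

lemma mult_cnj_cancel_right: "(y \<odot> x) \<odot> cnj x = n x *s y"
proof (rule polar_eqI)
  fix z
  have "p ((y \<odot> x) \<odot> cnj x) z = p (y \<odot> x) (z \<odot> x)"
    using polar_mult_adjoint_right[of _ "cnj x"] by simp
  also have "\<dots> = p y z * n x" by (rule polar_mult_right)
  finally show "p ((y \<odot> x) \<odot> cnj x) z = p (n x *s y) z" by (simp add: bilinear_simps mult.commute)
qed

lemma cnj_mult_cancel_left_polar: "cnj x \<odot> (y \<odot> z) + cnj y \<odot> (x \<odot> z) = p x y *s z"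
  using cnj_mult_cancel_left[of "x + y" z]
  by (simp add: cnj_add bilinear_simps n_add cnj_mult_cancel_left algebra_simps)

lemma mult_cnj_cancel_right_polar: "(z \<odot> x) \<odot> cnj y + (z \<odot> y) \<odot> cnj x = p x y *s z"
  using mult_cnj_cancel_right[of z "x + y"]
  by (simp add: cnj_add bilinear_simps n_add mult_cnj_cancel_right algebra_simps)

lemma mult_self: "x \<odot> x = tr x *s x - n x *s e"
proof (rule polar_eqI)
  fix z
  have "p (x \<odot> x) z = p x (cnj x \<odot> z)" by (rule polar_mult_adjoint_left)
  also have "\<dots> = tr x * p x z - p (x \<odot> e) (x \<odot> z)" by (simp add: cnj_mult_left_expand bilinear_simps)
  also have "\<dots> = tr x * p x z - n x * p e z" by (simp only: polar_mult_left)
  finally show "p (x \<odot> x) z = p (tr x *s x - n x *s e) z" by (simp add: bilinear_simps)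
qed

lemma mult_anticommutator: "x \<odot> y + y \<odot> x = tr x *s y + tr y *s x - p x y *s e"
proof -
  have "(x + y) \<odot> (x + y) = tr (x + y) *s (x + y) - n (x + y) *s e" by (rule mult_self)
  then have "x \<odot> x + y \<odot> y + (x \<odot> y + y \<odot> x) = tr x *s x - n x *s e + (tr y *s y - n y *s e)
     + (tr x *s y + tr y *s x - p x y *s e)"
    by (simp add: bilinear_simps tr_add n_add algebra_simps)
  then show ?thesis by (simp add: mult_self[of x] mult_self[of y])
qed

lemma tr_mult: "tr (x \<odot> y) = tr x * tr y - p x y"
proof -
  have "tr (x \<odot> y) = p y (cnj x \<odot> e)" by (simp add: tr_def polar_mult_adjoint_left)
  also have "\<dots> = tr x * tr y - p y x" by (simp add: cnj_def bilinear_simps tr_def polar_commute[of y e])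
  finally show ?thesis by (simp add: polar_commute)
qed

lemma cnj_mult: "cnj (x \<odot> y) = cnj y \<odot> cnj x"
proof -
  have "cnj y \<odot> cnj x = (tr y * tr x) *s e - tr y *s x - tr x *s y + y \<odot> x"
    by (simp add: cnj_def bilinear_simps algebra_simps)
  also have "y \<odot> x = tr x *s y + tr y *s x - p x y *s e - x \<odot> y"
    using mult_anticommutator[of x y] by (simp add: algebra_simps)
  finally show ?thesis by (simp add: cnj_def tr_mult bilinear_simps algebra_simps)
qed

lemma left_alternative: "x \<odot> (x \<odot> y) = (x \<odot> x) \<odot> y"
proof -
  have "x \<odot> (x \<odot> y) = tr x *s (x \<odot> y) - n x *s y"
    using cnj_mult_cancel_left[of x y] by (simp add: cnj_mult_left_expand algebra_simps)
  then show ?thesis by (simp add: mult_self bilinear_simps)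
qed

section \<open>Subalgebras and Cayley--Dickson doubling\<close>

definition subalgebra :: "'v set \<Rightarrow> bool" where
  "subalgebra B \<longleftrightarrow> vs.subspace B \<and> e \<in> B \<and> (\<forall>x\<in>B. \<forall>y\<in>B. x \<odot> y \<in> B)"

definition nondegenerate_on :: "'v set \<Rightarrow> bool" where
  "nondegenerate_on B \<longleftrightarrow> (\<forall>x\<in>B. (\<forall>y\<in>B. p x y = 0) \<longrightarrow> x = 0)"

definition perp :: "'v set \<Rightarrow> 'v set" where
  "perp B = {v. \<forall>b\<in>B. p v b = 0}"

definition double :: "'v set \<Rightarrow> 'v \<Rightarrow> 'v set" where
  "double B v = {a + b \<odot> v | a b. a \<in> B \<and> b \<in> B}"

definition isometric_hom :: "'v set \<Rightarrow> 'v set \<Rightarrow> ('v \<Rightarrow> 'v) \<Rightarrow> bool" where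
  "isometric_hom B B' f \<longleftrightarrow> (\<forall>x\<in>B. f x \<in> B') \<and> (\<forall>x\<in>B. \<forall>y\<in>B. f (x + y) = f x + f y) \<and>
     (\<forall>c. \<forall>x\<in>B. f (c *s x) = c *s f x) \<and> (\<forall>x\<in>B. \<forall>y\<in>B. f (x \<odot> y) = f x \<odot> f y) \<and>
     f e = e \<and> (\<forall>x\<in>B. n (f x) = n x)"

lemma subalgebra_unit: "subalgebra B \<Longrightarrow> e \<in> B"
  and subalgebra_mult: "subalgebra B \<Longrightarrow> x \<in> B \<Longrightarrow> y \<in> B \<Longrightarrow> x \<odot> y \<in> B"
  and subalgebra_zero: "subalgebra B \<Longrightarrow> 0 \<in> B"
  and subalgebra_add: "subalgebra B \<Longrightarrow> x \<in> B \<Longrightarrow> y \<in> B \<Longrightarrow> x + y \<in> B"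
  and subalgebra_diff: "subalgebra B \<Longrightarrow> x \<in> B \<Longrightarrow> y \<in> B \<Longrightarrow> x - y \<in> B"
  and subalgebra_scale: "subalgebra B \<Longrightarrow> x \<in> B \<Longrightarrow> c *s x \<in> B"
  by (simp_all add: subalgebra_def vs.subspace_0 vs.subspace_add vs.subspace_diff vs.subspace_scale)

lemma subalgebra_cnj: "subalgebra B \<Longrightarrow> x \<in> B \<Longrightarrow> cnj x \<in> B"
  unfolding cnj_def by (intro subalgebra_diff subalgebra_scale subalgebra_unit)

lemma subalgebra_UNIV: "subalgebra UNIV"
  by (simp add: subalgebra_def)

lemmas subalgebra_closed =
  subalgebra_mult subalgebra_add subalgebra_diff subalgebra_scale subalgebra_cnj

context
  fixes B v assumes B: "subalgebra B" and v: "v \<in> perp B"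
begin

lemma perp_tr: "tr v = 0"
  using v subalgebra_unit[OF B] by (simp add: perp_def tr_def)

lemma perp_cnj: "cnj v = - v"
  by (simp add: cnj_def perp_tr)

lemma perp_mult_commute_left: "y \<in> B \<Longrightarrow> v \<odot> y = cnj y \<odot> v"
proof -
  assume y: "y \<in> B"
  have "v \<odot> y + y \<odot> v = tr v *s y + tr y *s v - p v y *s e" by (rule mult_anticommutator)
  moreover have "p v y = 0" using v y by (simp add: perp_def)
  ultimately have "v \<odot> y = tr y *s v - y \<odot> v" by (simp add: perp_tr eq_diff_eq)
  then show ?thesis by (simp add: cnj_mult_left_expand)
qed

lemma perp_mult_commute: "y \<in> B \<Longrightarrow> y \<odot> v = v \<odot> cnj y"
  using perp_mult_commute_left[of "cnj y"] subalgebra_cnj[OF B] by simp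

lemma mult_double_right: "a \<in> B \<Longrightarrow> b \<in> B \<Longrightarrow> a \<odot> (b \<odot> v) = (b \<odot> a) \<odot> v"
proof -
  assume a: "a \<in> B" and b: "b \<in> B"
  have "cnj (cnj a) \<odot> (v \<odot> cnj b) + cnj v \<odot> (cnj a \<odot> cnj b) = p (cnj a) v *s cnj b"
    by (rule cnj_mult_cancel_left_polar)
  moreover have "p (cnj a) v = 0"
    using v subalgebra_cnj[OF B a] by (simp add: perp_def polar_commute[of "cnj a"])
  ultimately have "a \<odot> (v \<odot> cnj b) = v \<odot> (cnj a \<odot> cnj b)"
    by (simp add: perp_cnj bilinear_simps eq_neg_iff_add_eq_0)
  also have "\<dots> = (b \<odot> a) \<odot> v"
    using perp_mult_commute[of "b \<odot> a"] subalgebra_mult[OF B b a] by (simp add: cnj_mult)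
  finally show ?thesis using perp_mult_commute[OF b] by simp
qed

lemma mult_double_left: "a \<in> B \<Longrightarrow> b \<in> B \<Longrightarrow> (a \<odot> v) \<odot> b = (a \<odot> cnj b) \<odot> v"
proof -
  assume b: "b \<in> B"
  have "(a \<odot> v) \<odot> cnj (cnj b) + (a \<odot> cnj b) \<odot> cnj v = p v (cnj b) *s a"
    by (rule mult_cnj_cancel_right_polar)
  moreover have "p v (cnj b) = 0" using v subalgebra_cnj[OF B b] by (simp add: perp_def)
  ultimately show ?thesis by (simp add: perp_cnj bilinear_simps eq_neg_iff_add_eq_0)
qed

lemma mult_double_double: "a \<in> B \<Longrightarrow> b \<in> B \<Longrightarrow> (a \<odot> v) \<odot> (b \<odot> v) = - (n v *s (cnj b \<odot> a))"
proof -
  assume a: "a \<in> B" and b: "b \<in> B"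
  have cnj_av: "cnj (a \<odot> v) = - (a \<odot> v)"
    using perp_mult_commute_left[of "cnj a"] subalgebra_cnj[OF B a]
    by (simp add: cnj_mult perp_cnj bilinear_simps)
  have "cnj (cnj (a \<odot> v)) \<odot> (v \<odot> cnj b) + cnj v \<odot> (cnj (a \<odot> v) \<odot> cnj b)
      = p (cnj (a \<odot> v)) v *s cnj b"
    by (rule cnj_mult_cancel_left_polar)
  then have linearized: "(a \<odot> v) \<odot> (v \<odot> cnj b) + v \<odot> ((a \<odot> v) \<odot> cnj b) = p (- (a \<odot> v)) v *s cnj b"
    by (simp add: cnj_av perp_cnj bilinear_simps cnj_minus)
  have polar_av_v: "p (- (a \<odot> v)) v = - (tr a * n v)"
    using polar_mult_right[of a v e] by (simp add: bilinear_simps tr_def)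
  have av_b: "(a \<odot> v) \<odot> cnj b = (a \<odot> b) \<odot> v"
    using mult_double_left[OF a subalgebra_cnj[OF B b]] by simp
  have v_abv: "v \<odot> ((a \<odot> b) \<odot> v) = - (n v *s cnj (a \<odot> b))"
  proof -
    have "v \<odot> ((a \<odot> b) \<odot> v) = v \<odot> (v \<odot> cnj (a \<odot> b))"
      using perp_mult_commute[OF subalgebra_mult[OF B a b]] by simp
    also have "\<dots> = (v \<odot> v) \<odot> cnj (a \<odot> b)" by (rule left_alternative)
    finally show ?thesis by (simp add: mult_self perp_tr bilinear_simps)
  qed
  have "(a \<odot> v) \<odot> (v \<odot> cnj b) - n v *s cnj (a \<odot> b) = - ((tr a * n v) *s cnj b)"
    using linearized polar_av_v av_b v_abv by (simp add: eq_diff_eq[symmetric])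
  then have "(a \<odot> v) \<odot> (v \<odot> cnj b) = - ((tr a * n v) *s cnj b) + n v *s cnj (a \<odot> b)"
    by (simp add: diff_eq_eq)
  also have "\<dots> = n v *s (cnj b \<odot> cnj a - tr a *s cnj b)" by (simp add: cnj_mult bilinear_simps mult.commute)
  also have "\<dots> = - (n v *s (cnj b \<odot> a))" by (simp add: cnj_mult_right_expand bilinear_simps)
  finally show ?thesis using perp_mult_commute[OF b] by simp
qed

lemma mult_double:
  "a \<in> B \<Longrightarrow> b \<in> B \<Longrightarrow> c \<in> B \<Longrightarrow> d \<in> B \<Longrightarrow>
   (a + b \<odot> v) \<odot> (c + d \<odot> v) = (a \<odot> c - n v *s (cnj d \<odot> b)) + (d \<odot> a + b \<odot> cnj c) \<odot> v"
  by (simp add: bilinear_simps mult_double_right mult_double_left mult_double_double)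

lemma polar_perp_mult: "a \<in> B \<Longrightarrow> b \<in> B \<Longrightarrow> p a (b \<odot> v) = 0"
proof -
  assume a: "a \<in> B" and b: "b \<in> B"
  have "p (b \<odot> v) a = p v (cnj b \<odot> a)" by (rule polar_mult_adjoint_left)
  also have "\<dots> = 0" using v subalgebra_mult[OF B subalgebra_cnj[OF B b] a] by (simp add: perp_def)
  finally show ?thesis by (simp add: polar_commute)
qed

lemma n_double: "a \<in> B \<Longrightarrow> b \<in> B \<Longrightarrow> n (a + b \<odot> v) = n a + n b * n v"
  by (simp add: n_add n_mult polar_perp_mult)

lemma mem_double_base: "a \<in> B \<Longrightarrow> a \<in> double B v"
  unfolding double_def using subalgebra_zero[OF B] by force

lemma mem_double_perp: "b \<in> B \<Longrightarrow> b \<odot> v \<in> double B v"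
  unfolding double_def using subalgebra_zero[OF B] by force

lemma subalgebra_double: "subalgebra (double B v)"
  unfolding subalgebra_def
proof (intro conjI ballI)
  show "vs.subspace (double B v)"
  proof (rule vs.subspaceI)
    show "0 \<in> double B v" using mem_double_base subalgebra_zero[OF B] by blast
    show "x + y \<in> double B v" if xy: "x \<in> double B v" "y \<in> double B v" for x y
    proof -
      obtain a b c d where "a \<in> B" "b \<in> B" "c \<in> B" "d \<in> B" "x = a + b \<odot> v" "y = c + d \<odot> v"
        using xy unfolding double_def by blast
      then have "x + y = (a + c) + (b + d) \<odot> v" "a + c \<in> B" "b + d \<in> B"
        using B by (auto simp: bilinear_simps subalgebra_add algebra_simps)
      then show ?thesis unfolding double_def by blast
    qed
    show "c *s x \<in> double B v" if x: "x \<in> double B v" for c x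
    proof -
      obtain a b where "a \<in> B" "b \<in> B" "x = a + b \<odot> v"
        using x unfolding double_def by blast
      then have "c *s x = c *s a + (c *s b) \<odot> v" "c *s a \<in> B" "c *s b \<in> B"
        using B by (auto simp: bilinear_simps subalgebra_scale)
      then show ?thesis unfolding double_def by blast
    qed
  qed
  show "e \<in> double B v" using mem_double_base subalgebra_unit[OF B] by blast
  show "x \<odot> y \<in> double B v" if xy: "x \<in> double B v" "y \<in> double B v" for x y
  proof -
    obtain a b c d where abcd: "a \<in> B" "b \<in> B" "c \<in> B" "d \<in> B" "x = a + b \<odot> v" "y = c + d \<odot> v"
      using xy unfolding double_def by blast
    then have "x \<odot> y = (a \<odot> c - n v *s (cnj d \<odot> b)) + (d \<odot> a + b \<odot> cnj c) \<odot> v"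
      using mult_double by simp
    moreover have "a \<odot> c - n v *s (cnj d \<odot> b) \<in> B" "d \<odot> a + b \<odot> cnj c \<in> B"
      using abcd B by (auto intro!: subalgebra_closed)
    ultimately show ?thesis unfolding double_def by blast
  qed
qed

end

lemma
  assumes "isometric_hom B B' f"
  shows isometric_hom_mem: "x \<in> B \<Longrightarrow> f x \<in> B'"
    and isometric_hom_add: "x \<in> B \<Longrightarrow> y \<in> B \<Longrightarrow> f (x + y) = f x + f y"
    and isometric_hom_scale: "x \<in> B \<Longrightarrow> f (c *s x) = c *s f x"
    and isometric_hom_mult: "x \<in> B \<Longrightarrow> y \<in> B \<Longrightarrow> f (x \<odot> y) = f x \<odot> f y"
    and isometric_hom_unit: "f e = e"
    and isometric_hom_n: "x \<in> B \<Longrightarrow> n (f x) = n x"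
  using assms unfolding isometric_hom_def by blast+

context
  fixes B B' f assumes f: "isometric_hom B B' f" and B: "subalgebra B"
begin

lemma isometric_hom_zero: "f 0 = 0"
  using isometric_hom_scale[OF f subalgebra_zero[OF B], of 0] by simp

lemma isometric_hom_diff: "x \<in> B \<Longrightarrow> y \<in> B \<Longrightarrow> f (x - y) = f x - f y"
  using isometric_hom_add[OF f subalgebra_diff[OF B], of x y y] by (simp add: eq_diff_eq)

lemma isometric_hom_polar: "x \<in> B \<Longrightarrow> y \<in> B \<Longrightarrow> p (f x) (f y) = p x y"
  using isometric_hom_n[OF f subalgebra_add[OF B]] isometric_hom_n[OF f] isometric_hom_add[OF f]
  by (simp add: polar_def)

lemma isometric_hom_cnj: "x \<in> B \<Longrightarrow> f (cnj x) = cnj (f x)"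
  using isometric_hom_polar[of x e] isometric_hom_scale[OF f subalgebra_unit[OF B]]
  by (simp add: cnj_def tr_def isometric_hom_diff subalgebra_unit[OF B] subalgebra_scale[OF B]
      isometric_hom_unit[OF f])

end

lemma mult_right_cancel: "n v \<noteq> 0 \<Longrightarrow> x \<odot> v = y \<odot> v \<Longrightarrow> x = y"
  using mult_cnj_cancel_right[of "x - y" v] by (simp add: bilinear_simps)

context
  fixes B v
  assumes B: "subalgebra B" and B_nondeg: "nondegenerate_on B"
    and v: "v \<in> perp B" and v_aniso: "n v \<noteq> 0"
begin

lemma double_decomp_unique:
  assumes "a \<in> B" "b \<in> B" "a' \<in> B" "b' \<in> B" "a + b \<odot> v = a' + b' \<odot> v"
  shows "a = a' \<and> b = b'"
proof -
  have eq: "a - a' = (b' - b) \<odot> v" using assms(5) by (simp add: bilinear_simps algebra_simps)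
  have "\<forall>c\<in>B. p (a - a') c = 0"
    using polar_perp_mult[OF B v _ subalgebra_diff[OF B assms(4,2)]] eq by (simp add: polar_commute)
  then have "a = a'" using B_nondeg subalgebra_diff[OF B assms(1,3)] unfolding nondegenerate_on_def by auto
  moreover from this have "b' \<odot> v = b \<odot> v" using eq by (simp add: bilinear_simps)
  ultimately show ?thesis using mult_right_cancel[OF v_aniso] by auto
qed

lemma nondegenerate_double: "nondegenerate_on (double B v)"
  unfolding nondegenerate_on_def
proof (intro ballI impI)
  fix x assume "x \<in> double B v" and x_perp: "\<forall>y\<in>double B v. p x y = 0"
  then obtain a b where ab: "a \<in> B" "b \<in> B" "x = a + b \<odot> v" unfolding double_def by blast
  have "p a c = 0" if c: "c \<in> B" for c
  proof -
    have "p a c = p x c"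
      using polar_perp_mult[OF B v c ab(2)] ab by (simp add: polar_add_left polar_commute[of "b \<odot> v"])
    then show ?thesis using x_perp mem_double_base[OF B v c] by simp
  qed
  then have a0: "a = 0" using B_nondeg ab(1) by (simp add: nondegenerate_on_def)
  have "p b d = 0" if d: "d \<in> B" for d
  proof -
    have "p b d * n v = p x (d \<odot> v)" using a0 ab by (simp add: polar_mult_right)
    then show ?thesis using x_perp mem_double_perp[OF B v d] v_aniso by simp
  qed
  then have "b = 0" using B_nondeg ab(2) by (simp add: nondegenerate_on_def)
  with a0 ab show "x = 0" by simp
qed

definition cd_extend :: "('v \<Rightarrow> 'v) \<Rightarrow> 'v \<Rightarrow> 'v \<Rightarrow> 'v" where
  "cd_extend f v' x = (SOME y. \<exists>a\<in>B. \<exists>b\<in>B. x = a + b \<odot> v \<and> y = f a + f b \<odot> v')"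

lemma cd_extend_eq: "a \<in> B \<Longrightarrow> b \<in> B \<Longrightarrow> cd_extend f v' (a + b \<odot> v) = f a + f b \<odot> v'"
  unfolding cd_extend_def
proof (rule some_equality)
  fix y assume "a \<in> B" "b \<in> B" "\<exists>a'\<in>B. \<exists>b'\<in>B. a + b \<odot> v = a' + b' \<odot> v \<and> y = f a' + f b' \<odot> v'"
  then show "y = f a + f b \<odot> v'" using double_decomp_unique by metis
qed blast

context
  fixes B' v' f
  assumes B': "subalgebra B'" and v': "v' \<in> perp B'" and n_v': "n v' = n v"
    and f: "isometric_hom B B' f"
begin

lemma cd_extend_base: "a \<in> B \<Longrightarrow> cd_extend f v' a = f a"
  using cd_extend_eq[of a 0 f v'] subalgebra_zero[OF B] isometric_hom_zero[OF f B] by simp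

lemma cd_extend_perp: "cd_extend f v' v = v'"
  using cd_extend_eq[of 0 e f v'] subalgebra_zero[OF B] subalgebra_unit[OF B]
    isometric_hom_zero[OF f B] isometric_hom_unit[OF f] by simp

text \<open>The Cayley--Dickson formula for \<open>B \<oplus> B v\<close> involves only the product and conjugation
  of \<open>B\<close> and the scalar \<open>n v\<close>, so \<open>f\<close> extends by \<open>v \<mapsto> v'\<close>.\<close>

lemma isometric_hom_cd_extend: "isometric_hom (double B v) (double B' v') (cd_extend f v')"
  unfolding isometric_hom_def
proof (intro conjI ballI allI)
  fix x assume "x \<in> double B v"
  then obtain a b where ab: "a \<in> B" "b \<in> B" "x = a + b \<odot> v" unfolding double_def by blast
  have fx: "cd_extend f v' x = f a + f b \<odot> v'" using ab cd_extend_eq by simp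
  then show "cd_extend f v' x \<in> double B' v'"
    unfolding double_def using isometric_hom_mem[OF f] ab by blast
  show "n (cd_extend f v' x) = n x"
    using ab fx n_double[OF B v] n_double[OF B' v'] isometric_hom_mem[OF f] isometric_hom_n[OF f] n_v'
    by simp
  fix c
  have "cd_extend f v' (c *s x) = cd_extend f v' (c *s a + (c *s b) \<odot> v)"
    using ab by (simp add: bilinear_simps)
  also have "\<dots> = f (c *s a) + f (c *s b) \<odot> v'"
    using ab subalgebra_scale[OF B] by (simp add: cd_extend_eq)
  finally show "cd_extend f v' (c *s x) = c *s cd_extend f v' x"
    using ab fx isometric_hom_scale[OF f] by (simp add: bilinear_simps)
next
  fix x y assume "x \<in> double B v" "y \<in> double B v"
  then obtain a b c d where abcd: "a \<in> B" "b \<in> B" "c \<in> B" "d \<in> B" "x = a + b \<odot> v" "y = c + d \<odot> v"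
    unfolding double_def by blast
  have "cd_extend f v' (x + y) = cd_extend f v' ((a + c) + (b + d) \<odot> v)"
    using abcd by (simp add: bilinear_simps algebra_simps)
  also have "\<dots> = f (a + c) + f (b + d) \<odot> v'"
    using abcd subalgebra_add[OF B] by (simp add: cd_extend_eq)
  finally show "cd_extend f v' (x + y) = cd_extend f v' x + cd_extend f v' y"
    using abcd cd_extend_eq isometric_hom_add[OF f] by (simp add: bilinear_simps algebra_simps)
  have "x \<odot> y = (a \<odot> c - n v *s (cnj d \<odot> b)) + (d \<odot> a + b \<odot> cnj c) \<odot> v"
    using mult_double[OF B v] abcd by simp
  moreover have "a \<odot> c - n v *s (cnj d \<odot> b) \<in> B" "d \<odot> a + b \<odot> cnj c \<in> B"
    using abcd B by (auto intro!: subalgebra_closed)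
  ultimately have "cd_extend f v' (x \<odot> y)
      = f (a \<odot> c - n v *s (cnj d \<odot> b)) + f (d \<odot> a + b \<odot> cnj c) \<odot> v'"
    using cd_extend_eq by simp
  also have "\<dots> = (f a \<odot> f c - n v *s (cnj (f d) \<odot> f b)) + (f d \<odot> f a + f b \<odot> cnj (f c)) \<odot> v'"
    using abcd B
    by (simp add: isometric_hom_diff[OF f B] isometric_hom_add[OF f] isometric_hom_scale[OF f]
        isometric_hom_mult[OF f] isometric_hom_cnj[OF f B] subalgebra_closed)
  also have "\<dots> = (f a + f b \<odot> v') \<odot> (f c + f d \<odot> v')"
    using mult_double[OF B' v', of "f a" "f b" "f c" "f d"] isometric_hom_mem[OF f] abcd n_v' by simp
  finally show "cd_extend f v' (x \<odot> y) = cd_extend f v' x \<odot> cd_extend f v' y"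
    using abcd cd_extend_eq by simp
next
  show "cd_extend f v' e = e"
    using cd_extend_base subalgebra_unit[OF B] isometric_hom_unit[OF f] by simp
qed

end

end

definition has_orth_proj :: "'v set \<Rightarrow> bool" where
  "has_orth_proj B \<longleftrightarrow> (\<forall>c. \<exists>b\<in>B. c - b \<in> perp B)"

lemma has_orth_proj_double:
  assumes B: "subalgebra B" and v: "v \<in> perp B" and v_aniso: "n v \<noteq> 0" and proj: "has_orth_proj B"
  shows "has_orth_proj (double B v)"
  unfolding has_orth_proj_def
proof
  fix c
  obtain b1 where b1: "b1 \<in> B" "c - b1 \<in> perp B"
    using proj unfolding has_orth_proj_def by blast
  obtain r where r: "r \<in> B" "c \<odot> cnj v - r \<in> perp B"
    using proj unfolding has_orth_proj_def by blast
  define b2 where "b2 = (1 / n v) *s r"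
  have b2: "b2 \<in> B" using B r by (simp add: b2_def subalgebra_scale)
  have "p (c - (b1 + b2 \<odot> v)) y = 0" if "y \<in> double B v" for y
  proof -
    obtain a d where ad: "a \<in> B" "d \<in> B" "y = a + d \<odot> v"
      using \<open>y \<in> double B v\<close> unfolding double_def by blast
    have "p (c - b1) a = 0" using b1 ad by (simp add: perp_def)
    moreover have "p (b2 \<odot> v) a = 0"
      using polar_perp_mult[OF B v ad(1) b2] by (simp add: polar_commute)
    moreover have "p c (d \<odot> v) = p r d"
      using polar_mult_adjoint_right[of d v c] r ad
      by (simp add: perp_def polar_commute bilinear_simps)
    moreover have "p b1 (d \<odot> v) = 0" by (rule polar_perp_mult[OF B v b1(1) ad(2)])
    moreover have "p (b2 \<odot> v) (d \<odot> v) = p r d"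
      using v_aniso by (simp add: polar_mult_right b2_def bilinear_simps)
    ultimately show ?thesis using ad by (simp add: bilinear_simps algebra_simps)
  qed
  moreover have "b1 + b2 \<odot> v \<in> double B v" using b1 b2 unfolding double_def by blast
  ultimately show "\<exists>b\<in>double B v. c - b \<in> perp (double B v)" unfolding perp_def by blast
qed

text \<open>Project some \<open>y \<notin> B\<close>, and some \<open>c\<close> pairing nontrivially with that projection, orthogonally
  to \<open>B\<close>: if both projections are isotropic, their sum is not.\<close>

lemma exists_anisotropic_perp:
  assumes proj: "has_orth_proj B" and "B \<noteq> UNIV"
  obtains w where "w \<in> perp B" "n w \<noteq> 0"
proof -
  obtain y where "y \<notin> B" using \<open>B \<noteq> UNIV\<close> by blast
  moreover obtain y' where y': "y' \<in> B" "y - y' \<in> perp B"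
    using proj unfolding has_orth_proj_def by blast
  ultimately have "y - y' \<noteq> 0" by auto
  then obtain c where c: "p (y - y') c \<noteq> 0" using polar_nondegenerate by blast
  obtain c' where c': "c' \<in> B" "c - c' \<in> perp B"
    using proj unfolding has_orth_proj_def by blast
  have "p (y - y') (c - c') \<noteq> 0"
    using c c' y' by (simp add: perp_def polar_diff_right)
  then have "n (y - y') \<noteq> 0 \<or> n (c - c') \<noteq> 0 \<or> n (y - y' + (c - c')) \<noteq> 0"
    by (auto simp: n_add)
  moreover have "y - y' + (c - c') \<in> perp B"
    using y' c' by (simp add: perp_def polar_add_left)
  ultimately show ?thesis using that y'(2) c'(2) by blast
qed

section \<open>Two-dimensional subalgebras\<close>

definition disc :: "'v \<Rightarrow> 'a" where "disc u = 4 * n u - tr u * tr u"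

lemma disc_nonzero_not_scalar: "disc u \<noteq> 0 \<Longrightarrow> u \<noteq> c *s e"
  by (auto simp: disc_def n_scale tr_scale algebra_simps)

lemma span_pair_eq: "vs.span {e, u} = {a *s e + b *s u | a b. True}"
proof -
  have "x - a *s e = b *s u \<longleftrightarrow> x = a *s e + b *s u" for x a b
    by (auto simp: algebra_simps)
  then show ?thesis
    unfolding vs.span_insert[of e "{u}"] vs.span_singleton by (auto simp: image_iff)
qed

lemma mem_span_pair: "x \<in> vs.span {e, u} \<longleftrightarrow> (\<exists>a b. x = a *s e + b *s u)"
  by (simp add: span_pair_eq)

lemma span_pair_coeff_unique:
  assumes "disc u \<noteq> 0" "a *s e + b *s u = a' *s e + b' *s u"
  shows "a = a' \<and> b = b'"
proof -
  have h: "(b - b') *s u = (a' - a) *s e" using assms(2) by (simp add: algebra_simps)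
  have "b = b'"
  proof (rule ccontr)
    assume "b \<noteq> b'"
    then have "u = ((a' - a) / (b - b')) *s e"
      using h by (metis divide_inverse_commute eq_iff_diff_eq_0 vs.scale_scale
          left_inverse mult.commute vs.scale_one)
    with disc_nonzero_not_scalar[OF assms(1)] show False by blast
  qed
  with h show ?thesis using unit_nonzero by simp
qed

lemma mult_span_pair:
  "(a *s e + b *s u) \<odot> (c *s e + d *s u)
     = (a * c - b * d * n u) *s e + (a * d + b * c + b * d * tr u) *s u"
  by (simp add: bilinear_simps mult_self[of u] algebra_simps)

lemma polar_span_pair:
  "p (a *s e + b *s u) e = 2 * a + b * tr u"
  "p (a *s e + b *s u) u = a * tr u + 2 * b * n u"
  by (simp_all add: bilinear_simps polar_self tr_def polar_commute[of e u] algebra_simps)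

lemma perp_span_pair: "v \<in> perp (vs.span {e, u}) \<longleftrightarrow> p v e = 0 \<and> p v u = 0"
proof
  assume "v \<in> perp (vs.span {e, u})"
  then show "p v e = 0 \<and> p v u = 0" unfolding perp_def by (simp add: vs.span_base)
qed (auto simp: perp_def mem_span_pair bilinear_simps)

lemma subalgebra_span_pair: "subalgebra (vs.span {e, u})"
  unfolding subalgebra_def
proof (intro conjI ballI)
  fix x y assume "x \<in> vs.span {e, u}" "y \<in> vs.span {e, u}"
  then obtain a b c d where "x = a *s e + b *s u" "y = c *s e + d *s u"
    by (auto simp: mem_span_pair)
  then show "x \<odot> y \<in> vs.span {e, u}" by (metis mem_span_pair mult_span_pair)
qed (simp_all add: vs.span_base)

lemma nondegenerate_span_pair:
  assumes "disc u \<noteq> 0"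
  shows "nondegenerate_on (vs.span {e, u})"
  unfolding nondegenerate_on_def
proof (intro ballI impI)
  fix x assume "x \<in> vs.span {e, u}" and x_perp: "\<forall>y\<in>vs.span {e, u}. p x y = 0"
  then obtain a b where x: "x = a *s e + b *s u" by (auto simp: mem_span_pair)
  have h: "2 * a + b * tr u = 0" "a * tr u + 2 * b * n u = 0"
    using x_perp x by (auto simp: vs.span_base polar_span_pair[symmetric])
  have "a * disc u = 2 * n u * (2 * a + b * tr u) - tr u * (a * tr u + 2 * b * n u)"
    "b * disc u = 2 * (a * tr u + 2 * b * n u) - tr u * (2 * a + b * tr u)"
    by (simp_all add: disc_def algebra_simps)
  then have "a * disc u = 0" "b * disc u = 0" unfolding h by simp_all
  then have "a = 0" "b = 0" using assms by simp_all
  then show "x = 0" using x by simp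
qed

lemma has_orth_proj_span_pair:
  assumes "disc u \<noteq> 0"
  shows "has_orth_proj (vs.span {e, u})"
  unfolding has_orth_proj_def
proof
  fix c
  define a where "a = (2 * n u * p c e - tr u * p c u) / disc u"
  define b where "b = (2 * p c u - tr u * p c e) / disc u"
  have "2 * a + b * tr u = p c e" "a * tr u + 2 * b * n u = p c u"
    using assms unfolding a_def b_def by (simp_all add: field_simps) (simp_all add: disc_def algebra_simps)
  then have "c - (a *s e + b *s u) \<in> perp (vs.span {e, u})"
    by (simp add: perp_span_pair polar_diff_left polar_span_pair)
  then show "\<exists>b\<in>vs.span {e, u}. c - b \<in> perp (vs.span {e, u})" using mem_span_pair by blast
qed

definition pair_map :: "'v \<Rightarrow> 'v \<Rightarrow> 'v \<Rightarrow> 'v" where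
  "pair_map u u' x = (SOME y. \<exists>a b. x = a *s e + b *s u \<and> y = a *s e + b *s u')"

lemma pair_map_eq:
  assumes "disc u \<noteq> 0"
  shows "pair_map u u' (a *s e + b *s u) = a *s e + b *s u'"
  unfolding pair_map_def
proof (rule some_equality)
  fix y assume "\<exists>a' b'. a *s e + b *s u = a' *s e + b' *s u \<and> y = a' *s e + b' *s u'"
  then show "y = a *s e + b *s u'" using span_pair_coeff_unique[OF assms] by metis
qed blast

lemma isometric_hom_pair_map:
  assumes u: "disc u \<noteq> 0" and tr_u': "tr u' = tr u" and n_u': "n u' = n u"
  shows "isometric_hom (vs.span {e, u}) (vs.span {e, u'}) (pair_map u u')"
  unfolding isometric_hom_def
proof (intro conjI ballI allI)
  fix x assume "x \<in> vs.span {e, u}"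
  then obtain a b where x: "x = a *s e + b *s u" by (auto simp: mem_span_pair)
  show "pair_map u u' x \<in> vs.span {e, u'}" using x pair_map_eq[OF u] by (auto simp: mem_span_pair)
  show "n (pair_map u u' x) = n x"
    using x pair_map_eq[OF u]
    by (simp add: n_add n_scale bilinear_simps polar_commute[of e] tr_def[symmetric] tr_u' n_u')
  fix c
  have "c *s x = (c * a) *s e + (c * b) *s u" using x by (simp add: bilinear_simps)
  then show "pair_map u u' (c *s x) = c *s pair_map u u' x"
    using x pair_map_eq[OF u] by (simp add: bilinear_simps)
next
  fix x y assume "x \<in> vs.span {e, u}" "y \<in> vs.span {e, u}"
  then obtain a b c d where x: "x = a *s e + b *s u" and y: "y = c *s e + d *s u"
    by (auto simp: mem_span_pair)
  have "pair_map u u' (x + y) = pair_map u u' ((a + c) *s e + (b + d) *s u)"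
    using x y by (simp add: bilinear_simps algebra_simps)
  also have "\<dots> = (a + c) *s e + (b + d) *s u'" by (rule pair_map_eq[OF u])
  finally show "pair_map u u' (x + y) = pair_map u u' x + pair_map u u' y"
    using x y pair_map_eq[OF u] by (simp add: bilinear_simps algebra_simps)
  show "pair_map u u' (x \<odot> y) = pair_map u u' x \<odot> pair_map u u' y"
    using x y pair_map_eq[OF u] by (simp add: mult_span_pair tr_u' n_u')
next
  show "pair_map u u' e = e" using pair_map_eq[OF u, of u' 1 0] by simp
qed

context
  fixes \<phi> assumes \<phi>: "algebra_aut sc (\<odot>) \<phi>"
begin

interpretation \<phi>: Vector_Spaces.linear sc sc \<phi>
  using \<phi> by (simp add: algebra_aut_def)

lemma algebra_aut_unit: "\<phi> e = e"
proof -
  obtain y where "\<phi> y = e" using \<phi> unfolding algebra_aut_def by (metis bij_pointE)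
  moreover have "\<phi> e \<odot> \<phi> y = \<phi> y" using \<phi> unfolding algebra_aut_def by (metis mult_unit_left)
  ultimately show ?thesis by simp
qed

text \<open>Applying \<open>\<phi>\<close> to \<open>x \<odot> x = tr x *s x - n x *s e\<close> gives a second such equation for \<open>\<phi> x\<close>;
  comparing the two, \<open>\<phi> x\<close> would be a scalar unless the coefficients agree.\<close>

lemma algebra_aut_n: "n (\<phi> x) = n x"
proof -
  have "\<phi> (x \<odot> x) = tr x *s \<phi> x - n x *s e"
    by (simp add: mult_self[of x] \<phi>.diff \<phi>.scale algebra_aut_unit)
  moreover have "\<phi> (x \<odot> x) = tr (\<phi> x) *s \<phi> x - n (\<phi> x) *s e"
    using \<phi> mult_self[of "\<phi> x"] by (simp add: algebra_aut_def)
  ultimately have h: "(tr (\<phi> x) - tr x) *s \<phi> x = (n (\<phi> x) - n x) *s e"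
    by (simp add: algebra_simps)
  have "tr (\<phi> x) = tr x"
  proof (rule ccontr)
    assume ne: "tr (\<phi> x) \<noteq> tr x"
    define c where "c = (n (\<phi> x) - n x) / (tr (\<phi> x) - tr x)"
    have "(1 / (tr (\<phi> x) - tr x)) *s ((tr (\<phi> x) - tr x) *s \<phi> x) = \<phi> x" using ne by simp
    then have "\<phi> x = c *s e" using h by (simp add: c_def)
    also have "\<dots> = \<phi> (c *s e)" by (simp add: \<phi>.scale algebra_aut_unit)
    finally have "x = c *s e" using \<phi> by (simp add: algebra_aut_def bij_def inj_eq)
    with ne show False by (simp add: \<phi>.scale algebra_aut_unit)
  qed
  then show ?thesis using h unit_nonzero by simp
qed

end

end

locale cayley = composition_algebra sc mult e n
  for sc :: "'a::field \<Rightarrow> 'v::ab_group_add \<Rightarrow> 'v" (infixr "*s" 75)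
    and mult :: "'v \<Rightarrow> 'v \<Rightarrow> 'v" (infixl "\<odot>" 70) and e n +
  assumes dim_UNIV_eq_8: "vector_space.dim sc (UNIV :: 'v set) = 8"
begin

definition cayley_basis :: "'v set" where
  "cayley_basis = (SOME B. vs.independent B \<and> vs.span B = UNIV \<and> finite B)"

lemma cayley_basis: "vs.independent cayley_basis \<and> vs.span cayley_basis = UNIV \<and> finite cayley_basis"
proof -
  obtain B where B: "vs.independent B" "UNIV \<subseteq> vs.span B" "card B = vs.dim (UNIV :: 'v set)"
    using vs.basis_exists[of UNIV] by blast
  then have "finite B" using dim_UNIV_eq_8 by (metis card.infinite zero_neq_numeral)
  with B have "\<exists>B. vs.independent B \<and> vs.span B = UNIV \<and> finite B" by blast
  then show ?thesis unfolding cayley_basis_def by (rule someI_ex)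
qed

sublocale fd: finite_dimensional_vector_space sc cayley_basis
  by unfold_locales (use cayley_basis in auto)

sublocale fdp: finite_dimensional_vector_space_pair_1 sc cayley_basis sc ..

lemma dim_span_pair:
  assumes "disc u \<noteq> 0"
  shows "vs.dim (vs.span {e, u}) = 2"
proof -
  have "u \<noteq> 0" using disc_nonzero_not_scalar[OF assms, of 0] by simp
  moreover have "e \<notin> vs.span {u}"
  proof
    assume "e \<in> vs.span {u}"
    then obtain k where k: "e = k *s u" by (auto simp: vs.span_singleton)
    then have "u = (1 / k) *s e" using unit_nonzero by auto
    then show False using disc_nonzero_not_scalar[OF assms] by blast
  qed
  ultimately show ?thesis by (simp add: fd.dim_insert vs.dim_span)
qed

lemma dim_double:
  assumes B: "subalgebra B" and B_nondeg: "nondegenerate_on B"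
    and v: "v \<in> perp B" and v_aniso: "n v \<noteq> 0"
  shows "vs.dim (double B v) = 2 * vs.dim B"
proof -
  let ?Bv = "(\<lambda>b. b \<odot> v) ` B"
  have "vs.subspace B" using B by (simp add: subalgebra_def)
  moreover have "vs.subspace ?Bv"
    using \<open>vs.subspace B\<close> linear_mult_right by (simp add: fdp.linear_subspace_image)
  moreover have "vs.dim (B \<inter> ?Bv) = 0"
  proof -
    have "x = 0" if "x \<in> B" "b \<in> B" "x = b \<odot> v" for x b
      using that double_decomp_unique[OF B B_nondeg v v_aniso, of x 0 0 b] subalgebra_zero[OF B] by simp
    then show ?thesis by auto
  qed
  ultimately have "vs.dim {x + y |x y. x \<in> B \<and> y \<in> ?Bv} = vs.dim B + vs.dim ?Bv"
    using fd.dim_sums_Int[of B ?Bv] by (simp del: fd.dim_eq_0)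
  moreover have "double B v = {x + y |x y. x \<in> B \<and> y \<in> ?Bv}" unfolding double_def by blast
  moreover have "vs.dim ?Bv = vs.dim B"
    by (rule fdp.dim_image_eq[OF linear_mult_right]) (auto intro: inj_onI mult_right_cancel[OF v_aniso])
  ultimately show ?thesis by simp
qed

lemma double_eq_UNIV:
  assumes B: "subalgebra B" "nondegenerate_on B" "vs.dim B = 4" and w: "w \<in> perp B" "n w \<noteq> 0"
  shows "double B w = UNIV"
proof (rule fd.subspace_dim_equal)
  show "vs.subspace (double B w)" using subalgebra_double[OF B(1) w(1)] by (simp add: subalgebra_def)
  show "vs.dim (UNIV :: 'v set) \<le> vs.dim (double B w)"
    using dim_double[OF B(1,2) w] B(3) dim_UNIV_eq_8 by simp
qed auto

lemma subspace_perp: "vs.subspace (perp B)"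
  by (rule vs.subspaceI) (auto simp: perp_def bilinear_simps)

lemma dim_polar_hyperplane:
  assumes S: "vs.subspace S"
  shows "vs.dim S \<le> vs.dim {x\<in>S. p x z = 0} + 1"
proof (cases "\<forall>x\<in>S. p x z = 0")
  case True
  then have "{x\<in>S. p x z = 0} = S" by blast
  then show ?thesis by simp
next
  case False
  then obtain s where s: "s \<in> S" "p s z \<noteq> 0" by blast
  let ?S0 = "{x\<in>S. p x z = 0}"
  have "S \<subseteq> vs.span (insert s ?S0)"
  proof
    fix x assume x: "x \<in> S"
    have "x - (p x z / p s z) *s s \<in> ?S0"
      using x s S by (simp add: bilinear_simps vs.subspace_diff vs.subspace_scale)
    then show "x \<in> vs.span (insert s ?S0)" by (auto simp: vs.span_breakdown_eq intro: vs.span_base)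
  qed
  then have "vs.dim S \<le> vs.dim (insert s ?S0)" by (rule fd.dim_mono)
  also have "\<dots> \<le> vs.dim ?S0 + 1" by (simp add: fd.dim_insert)
  finally show ?thesis .
qed

lemma subspace_polar_hyperplane: "vs.subspace S \<Longrightarrow> vs.subspace {x\<in>S. p x z = 0}"
  by (rule vs.subspaceI) (auto simp: bilinear_simps vs.subspace_0 vs.subspace_add vs.subspace_scale)

text \<open>Otherwise pick \<open>h1 \<noteq> 0\<close> in \<open>W\<close>, \<open>q \<in> H\<close> with \<open>p h1 q \<noteq> 0\<close> and \<open>h \<noteq> 0\<close> in \<open>W\<close> orthogonal to
  \<open>q\<close>: then \<open>h\<close> is orthogonal to \<open>W\<close> and \<open>q\<close>, which span \<open>H\<close>.\<close>

lemma totally_isotropic_dim_bound: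
  assumes H: "vs.subspace H" "nondegenerate_on H"
    and W: "vs.subspace W" "W \<subseteq> H" "\<forall>x\<in>W. \<forall>y\<in>W. p x y = 0" and dim_W: "2 \<le> vs.dim W"
  shows "vs.dim W + 2 \<le> vs.dim H"
proof (rule ccontr)
  assume "\<not> ?thesis"
  then have dim_H: "vs.dim H \<le> vs.dim W + 1" by simp
  have "\<not> W \<subseteq> {0}" using dim_W fd.dim_eq_0[of W, THEN iffD2] by linarith
  then obtain h1 where h1: "h1 \<in> W" "h1 \<noteq> 0" by auto
  then obtain q where q: "q \<in> H" "p h1 q \<noteq> 0"
    using H(2) W(2) unfolding nondegenerate_on_def by blast
  have "q \<notin> W" using W(3) h1 q by blast
  then have "q \<notin> vs.span W" using W(1) by (simp add: vs.span_eq_iff[THEN iffD2])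
  define W' where "W' = {x\<in>W. p x q = 0}"
  have "vs.dim W \<le> vs.dim W' + 1" unfolding W'_def by (rule dim_polar_hyperplane[OF W(1)])
  then have "\<not> W' \<subseteq> {0}" using dim_W fd.dim_eq_0[of W', THEN iffD2] by linarith
  then obtain h where h: "h \<in> W'" "h \<noteq> 0" by auto
  have "vs.span (insert q W) = H"
  proof (rule fd.subspace_dim_equal)
    show "vs.span (insert q W) \<subseteq> H" using H(1) W(2) q(1) by (simp add: vs.span_minimal)
    show "vs.dim H \<le> vs.dim (vs.span (insert q W))"
      using dim_H \<open>q \<notin> vs.span W\<close> by (simp add: fd.dim_insert)
  qed (simp_all add: H(1))
  moreover have "vs.span (insert q W) \<subseteq> {y. p h y = 0}"
    using h W(3) unfolding W'_def
    by (intro vs.span_minimal) (auto intro: vs.subspaceI simp: bilinear_simps)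
  ultimately have "\<forall>y\<in>H. p h y = 0" by blast
  then show False using H(2) h W(2) unfolding nondegenerate_on_def W'_def by blast
qed

context
  fixes Q w0
  assumes Q: "subalgebra Q" "nondegenerate_on Q" "vs.dim Q = 4"
    and w0: "w0 \<in> perp Q" "n w0 \<noteq> 0"
begin

lemma perp_eq_mult_image: "perp Q = (\<lambda>b. b \<odot> w0) ` Q"
proof
  show "perp Q \<subseteq> (\<lambda>b. b \<odot> w0) ` Q"
  proof
    fix h assume h: "h \<in> perp Q"
    have "h \<in> double Q w0" using double_eq_UNIV[OF Q w0] by simp
    then obtain a b where ab: "a \<in> Q" "b \<in> Q" "h = a + b \<odot> w0" unfolding double_def by blast
    have "p a c = p h c" if "c \<in> Q" for c
      using ab polar_perp_mult[OF Q(1) w0(1) that ab(2)]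
      by (simp add: polar_add_left polar_commute[of "b \<odot> w0"])
    then have "a = 0" using Q(2) ab(1) h unfolding nondegenerate_on_def perp_def by auto
    then show "h \<in> (\<lambda>b. b \<odot> w0) ` Q" using ab by simp
  qed
  show "(\<lambda>b. b \<odot> w0) ` Q \<subseteq> perp Q"
    using polar_perp_mult[OF Q(1) w0(1)] by (auto simp: perp_def polar_commute)
qed

lemma dim_perp: "vs.dim (perp Q) = 4"
  unfolding perp_eq_mult_image
  using fdp.dim_image_eq[OF linear_mult_right, of w0 Q] mult_right_cancel[OF w0(2)] Q(3)
  by (auto intro: inj_onI)

lemma nondegenerate_perp: "nondegenerate_on (perp Q)"
  unfolding nondegenerate_on_def
proof (intro ballI impI)
  fix h assume h: "h \<in> perp Q" and h_perp: "\<forall>y\<in>perp Q. p h y = 0"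
  have "p h y = 0" for y
  proof -
    have "y \<in> double Q w0" using double_eq_UNIV[OF Q w0] by simp
    then obtain a b where "a \<in> Q" "b \<in> Q" "y = a + b \<odot> w0" unfolding double_def by blast
    then show ?thesis using h h_perp perp_eq_mult_image by (auto simp: perp_def polar_add_right)
  qed
  then show "h = 0" by (rule polar_nondegenerate)
qed

lemma exists_anisotropic_perp_polar_zero:
  obtains w where "w \<in> perp Q" "p w z = 0" "n w \<noteq> 0"
proof -
  define W where "W = {x \<in> perp Q. p x z = 0}"
  have W: "vs.subspace W" "W \<subseteq> perp Q"
    unfolding W_def by (auto intro: subspace_polar_hyperplane subspace_perp)
  have dim_W: "3 \<le> vs.dim W"
    using dim_polar_hyperplane[OF subspace_perp, of Q z] dim_perp unfolding W_def by simp
  have "\<exists>w\<in>W. n w \<noteq> 0"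
  proof (rule ccontr)
    assume "\<not> ?thesis"
    then have "\<forall>x\<in>W. \<forall>y\<in>W. p x y = 0"
      using W(1) by (simp add: polar_def vs.subspace_add)
    then have "vs.dim W + 2 \<le> vs.dim (perp Q)"
      using totally_isotropic_dim_bound[OF subspace_perp nondegenerate_perp W] dim_W by simp
    then show False using dim_perp dim_W by simp
  qed
  then show ?thesis using that unfolding W_def by blast
qed

end

lemma isometric_hom_UNIV_imp_aut:
  assumes s: "isometric_hom UNIV B s"
  shows "algebra_aut sc (\<odot>) s"
proof -
  have lin: "Vector_Spaces.linear sc sc s"
    using s by (simp add: Vector_Spaces.linear_iff vs.vector_space_axioms isometric_hom_add isometric_hom_scale)
  have "inj s"
  proof (rule injI)
    fix x y assume "s x = s y"
    then have "p (x - y) c = 0" for c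
      using isometric_hom_polar[OF s subalgebra_UNIV, of "x - y" c]
        isometric_hom_diff[OF s subalgebra_UNIV] by simp
    then show "x = y" using polar_nondegenerate[of "x - y"] by simp
  qed
  then show ?thesis
    using lin fd.linear_inj_imp_surj[OF lin] isometric_hom_mult[OF s]
    by (simp add: algebra_aut_def bij_def)
qed

section \<open>Local automorphisms\<close>

lemma isometry_in_orthogonal_group:
  assumes lin: "Vector_Spaces.linear sc sc \<psi>" and n_\<psi>: "\<And>x. n (\<psi> x) = n x"
  shows "\<psi> \<in> orthogonal_group sc n"
proof -
  interpret \<psi>: Vector_Spaces.linear sc sc \<psi> by (fact lin)
  have "inj \<psi>"
  proof (rule \<psi>.inj_iff_eq_0[THEN iffD2], intro allI impI)
    fix x assume "\<psi> x = 0"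
    then have "p x y = 0" for y
      using n_\<psi>[of "x + y"] n_\<psi>[of x] n_\<psi>[of y] by (simp add: polar_def \<psi>.add)
    then show "x = 0" by (rule polar_nondegenerate)
  qed
  then show ?thesis
    using lin n_\<psi> fd.linear_inj_imp_surj[OF lin] by (simp add: orthogonal_group_def bij_def)
qed

lemma local_aut_imp_orthogonal_unital:
  assumes "local_aut sc (\<odot>) \<psi>"
  shows "\<psi> \<in> orthogonal_group sc n" and "\<psi> e = e"
proof -
  have lin: "Vector_Spaces.linear sc sc \<psi>"
    and pointwise: "\<forall>x. \<exists>\<phi>. algebra_aut sc (\<odot>) \<phi> \<and> \<psi> x = \<phi> x"
    using assms by (auto simp: local_aut_def)
  show "\<psi> \<in> orthogonal_group sc n"
    using isometry_in_orthogonal_group[OF lin] pointwise algebra_aut_n by metis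
  show "\<psi> e = e" using pointwise algebra_aut_unit by metis
qed

text \<open>For such a pair, \<open>e, u, v, u \<odot> v\<close> span the quaternion subalgebra
  \<open>double (vs.span {e, u}) v\<close>.\<close>

definition quaternion_pair :: "'v \<Rightarrow> 'v \<Rightarrow> bool" where
  "quaternion_pair u v \<longleftrightarrow> disc u \<noteq> 0 \<and> v \<in> perp (vs.span {e, u}) \<and> n v \<noteq> 0"

context
  fixes g assumes g: "g \<in> orthogonal_group sc n" and g_unit: "g e = e"
begin

interpretation g: Vector_Spaces.linear sc sc g
  using g by (simp add: orthogonal_group_def)

lemma g_n: "n (g x) = n x"
  using g by (simp add: orthogonal_group_def)

lemma g_polar: "p (g x) (g y) = p x y"
  by (simp add: polar_def g_n g.add[symmetric])

lemma g_tr: "tr (g x) = tr x"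
  using g_polar[of x e] g_unit by (simp add: tr_def)

lemma quaternion_pair_image: "quaternion_pair u v \<Longrightarrow> quaternion_pair (g u) (g v)"
  using g_polar[of v e] g_polar[of v u] g_unit
  by (simp add: quaternion_pair_def disc_def g_tr g_n perp_span_pair)

text \<open>The vector \<open>w\<close> of the second doubling must satisfy \<open>g w \<perp> g u \<odot> g v\<close>, which is not
  automatic since \<open>g\<close> is not multiplicative; hence the extra condition on \<open>w\<close>.\<close>

lemma perp_double_image:
  assumes uv: "quaternion_pair u v"
    and w: "w \<in> perp (double (vs.span {e, u}) v)" "p w (inv g (g u \<odot> g v)) = 0"
  shows "g w \<in> perp (double (vs.span {e, g u}) (g v))"
  unfolding perp_def
proof (intro CollectI ballI)
  fix y assume "y \<in> double (vs.span {e, g u}) (g v)"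
  then obtain a1 a2 b1 b2 where y: "y = (a1 *s e + a2 *s g u) + (b1 *s e + b2 *s g u) \<odot> g v"
    unfolding double_def mem_span_pair by blast
  define a where "a = a1 *s e + a2 *s u"
  have "g u \<odot> g v = g (inv g (g u \<odot> g v))"
    using g by (simp add: orthogonal_group_def bij_is_surj surj_f_inv_f)
  then have "y = g (a + (b1 *s v + b2 *s inv g (g u \<odot> g v)))"
    by (simp add: y a_def bilinear_simps g.add g.scale g_unit)
  moreover have v: "v \<in> perp (vs.span {e, u})" using uv by (simp add: quaternion_pair_def)
  then have "a \<in> double (vs.span {e, u}) v"
    unfolding a_def by (intro mem_double_base[OF subalgebra_span_pair]) (auto simp: mem_span_pair)
  moreover have "v \<in> double (vs.span {e, u}) v"
    using mem_double_perp[OF subalgebra_span_pair v, of e] by (simp add: vs.span_base)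
  ultimately show "p (g w) y = 0"
    using w by (simp add: g_polar perp_def polar_add_right polar_scale_right)
qed

lemma exists_aut_agreeing_on_pair:
  assumes uv: "quaternion_pair u v"
  obtains \<sigma> where "algebra_aut sc (\<odot>) \<sigma>" "\<sigma> u = g u" "\<sigma> v = g v"
proof -
  let ?K = "vs.span {e, u}" and ?K' = "vs.span {e, g u}"
  let ?Q = "double ?K v" and ?Q' = "double ?K' (g v)"
  have u: "disc u \<noteq> 0" and v: "v \<in> perp ?K" "n v \<noteq> 0"
    using uv by (simp_all add: quaternion_pair_def)
  have v': "g v \<in> perp ?K'"
    using quaternion_pair_image[OF uv] by (simp add: quaternion_pair_def)
  note K = subalgebra_span_pair[of u] nondegenerate_span_pair[OF u]
  have Q: "subalgebra ?Q" "nondegenerate_on ?Q" "vs.dim ?Q = 4"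
    using subalgebra_double[OF K(1) v(1)] nondegenerate_double[OF K v] dim_double[OF K v]
      dim_span_pair[OF u] by simp_all
  have Q': "subalgebra ?Q'" by (rule subalgebra_double[OF subalgebra_span_pair v'])
  have u_Q: "u \<in> ?Q" and v_Q: "v \<in> ?Q"
    using mem_double_base[OF K(1) v(1), of u] mem_double_perp[OF K(1) v(1), of e]
    by (simp_all add: vs.span_base)
  define s where "s = cd_extend ?K v (pair_map u (g u)) (g v)"
  note ext_K = K v subalgebra_span_pair v' g_n isometric_hom_pair_map[OF u g_tr g_n]
  have s: "isometric_hom ?Q ?Q' s" "s u = g u" "s v = g v"
    using isometric_hom_cd_extend[OF ext_K] cd_extend_base[OF ext_K, of u] cd_extend_perp[OF ext_K]
      pair_map_eq[OF u, of "g u" 0 1]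
    by (simp_all add: s_def vs.span_base)
  have "?Q \<noteq> UNIV" using Q(3) dim_UNIV_eq_8 by auto
  then obtain w0 where w0: "w0 \<in> perp ?Q" "n w0 \<noteq> 0"
    using exists_anisotropic_perp has_orth_proj_double[OF K(1) v has_orth_proj_span_pair[OF u]]
    by blast
  obtain w where w: "w \<in> perp ?Q" "p w (inv g (g u \<odot> g v)) = 0" "n w \<noteq> 0"
    using exists_anisotropic_perp_polar_zero[OF Q w0] by blast
  define \<sigma> where "\<sigma> = cd_extend ?Q w s (g w)"
  note ext_Q = Q(1,2) w(1,3) Q' perp_double_image[OF uv w(1,2)] g_n s(1)
  have "isometric_hom UNIV (double ?Q' (g w)) \<sigma>"
    using isometric_hom_cd_extend[OF ext_Q] double_eq_UNIV[OF Q w(1,3)] by (simp add: \<sigma>_def)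
  moreover have "\<sigma> u = g u" "\<sigma> v = g v"
    using cd_extend_base[OF ext_Q] u_Q v_Q s(2,3) by (simp_all add: \<sigma>_def)
  ultimately show thesis using that isometric_hom_UNIV_imp_aut by blast
qed

end

lemma quaternion_pair_disc_nonzero:
  assumes "disc x \<noteq> 0"
  obtains v where "quaternion_pair x v"
proof -
  have "vs.span {e, x} \<noteq> UNIV"
  proof
    assume "vs.span {e, x} = UNIV"
    then show False using dim_span_pair[OF assms] dim_UNIV_eq_8 by simp
  qed
  then show thesis
    using that exists_anisotropic_perp[OF has_orth_proj_span_pair[OF assms]] assms
    by (auto simp: quaternion_pair_def)
qed

text \<open>Away from characteristic 2 a vector with \<open>disc x = 0\<close> is \<open>tr x / 2\<close> plus an isotropic
  \<open>x0 \<perp> e\<close>. A vector \<open>v \<perp> e\<close> with \<open>p v x = 2 * n v \<noteq> 0\<close> then makes \<open>(x - v, v)\<close> a quaternion pair,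
  with \<open>disc (x - v) = - 4 * n v\<close>.\<close>

lemma quaternion_pair_disc_zero:
  assumes two: "(2::'a) \<noteq> 0" and "disc x = 0" and x: "\<forall>c. x \<noteq> c *s e"
  obtains v where "quaternion_pair (x - v) v"
proof -
  define h where "h = tr x / 2"
  define x0 where "x0 = x - h *s e"
  have tr_x: "tr x = 2 * h" using two by (simp add: h_def)
  have "tr x0 = 0" by (simp add: x0_def tr_diff tr_scale tr_x)
  then have x0_e: "p x0 e = 0" by (simp add: tr_def)
  have "2 * (2 * n x0) = disc x" by (simp add: x0_def n_diff_scale_unit disc_def tr_x algebra_simps)
  then have n_x0: "n x0 = 0" using \<open>disc x = 0\<close> two by (metis mult_eq_0_iff)
  have "x = x0 + h *s e" by (simp add: x0_def)
  then have x0_x: "p x0 x = 0"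
    using x0_e n_x0 by (simp add: polar_add_right polar_scale_right polar_self)
  obtain z where z: "p z e = 0" "p z x = 1" using exists_polar_dual[OF unit_nonzero] x by blast
  have z_x0: "p z x0 = 1" using z by (simp add: x0_def polar_diff_right polar_scale_right)
  define v where "v = z + (1 / 2 - n z) *s x0"
  have v_e: "p v e = 0" using z x0_e by (simp add: v_def polar_add_left polar_scale_left)
  have v_x: "p v x = 1" using z x0_x by (simp add: v_def polar_add_left polar_scale_left)
  have n_v: "2 * n v = 1"
    using two by (simp add: v_def n_add n_scale n_x0 polar_scale_right z_x0 field_simps)
  have "p v (x - v) = 0" using v_x n_v by (simp add: polar_diff_right polar_self)
  moreover have "tr (x - v) = tr x" using v_e by (simp add: tr_def polar_diff_left)
  then have "disc (x - v) = disc x + 2 * (2 * n v) - 4 * p v x"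
    by (simp add: disc_def n_diff polar_commute[of x v] algebra_simps)
  then have "disc (x - v) \<noteq> 0" using \<open>disc x = 0\<close> n_v v_x two by simp
  moreover have "n v \<noteq> 0" using n_v by auto
  ultimately show thesis using that v_e by (simp add: quaternion_pair_def perp_span_pair)
qed

lemma quaternion_pair_char_two:
  assumes two: "(2::'a) = 0" and "disc x = 0" and x: "\<forall>c. x \<noteq> c *s e"
  obtains u v c where "quaternion_pair u v" "x = c *s e + v"
proof -
  have "(4::'a) = 2 * 2" by simp
  with two have four: "(4::'a) = 0" by simp
  then have tr_x: "tr x = 0" using \<open>disc x = 0\<close> by (simp add: disc_def)
  define v where "v = (if n x = 0 then x + e else x)"
  have v_e: "p v e = 0" using tr_x two by (simp add: v_def polar_add_left polar_self tr_def)
  have n_v: "n v \<noteq> 0" using tr_x by (simp add: v_def n_add tr_def)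
  have "\<forall>c. e \<noteq> c *s v"
  proof (intro allI notI)
    fix c assume "e = c *s v"
    then have "v = (1 / c) *s e" using unit_nonzero by (cases "c = 0") auto
    then have "x = (1 / c - (if n x = 0 then 1 else 0)) *s e"
      by (cases "n x = 0") (simp_all add: v_def vs.scale_left_diff_distrib eq_diff_eq)
    then show False using x by blast
  qed
  then obtain u where u: "p u v = 0" "p u e = 1"
    using exists_polar_dual n_v by (metis n_zero)
  have "disc u \<noteq> 0" using u four by (simp add: disc_def tr_def)
  then have "quaternion_pair u v"
    using u v_e n_v by (simp add: quaternion_pair_def perp_span_pair polar_commute[of v])
  moreover have "x = (if n x = 0 then -1 else 0) *s e + v" by (simp add: v_def)
  ultimately show thesis using that by blast
qed

lemma exists_quaternion_pair:
  assumes "\<forall>c. x \<noteq> c *s e"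
  obtains u v a b c where "quaternion_pair u v" "x = a *s e + b *s u + c *s v"
proof -
  consider "disc x \<noteq> 0" | "disc x = 0" "(2::'a) \<noteq> 0" | "disc x = 0" "(2::'a) = 0" by blast
  then show thesis
  proof cases
    case 1
    then obtain v where "quaternion_pair x v" by (rule quaternion_pair_disc_nonzero)
    then show thesis using that[of x v 0 1 0] by simp
  next
    case 2
    then obtain v where "quaternion_pair (x - v) v" using quaternion_pair_disc_zero assms by blast
    then show thesis using that[of "x - v" v 0 1 1] by simp
  next
    case 3
    then obtain u v c where "quaternion_pair u v" "x = c *s e + v"
      using quaternion_pair_char_two assms by blast
    then show thesis using that[of u v c 0 1] by simp
  qed
qed

lemma orthogonal_unital_imp_local_aut:
  assumes g: "g \<in> orthogonal_group sc n" and g_unit: "g e = e"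
  shows "local_aut sc (\<odot>) g"
  unfolding local_aut_def
proof (intro conjI allI)
  show lin: "Vector_Spaces.linear sc sc g" using g by (simp add: orthogonal_group_def)
  interpret g: Vector_Spaces.linear sc sc g by (fact lin)
  fix x
  show "\<exists>\<phi>. algebra_aut sc (\<odot>) \<phi> \<and> g x = \<phi> x"
  proof (cases "\<exists>c. x = c *s e")
    case True
    then have "g x = id x" using g.scale g_unit by auto
    moreover have "algebra_aut sc (\<odot>) id"
      by (simp add: algebra_aut_def Vector_Spaces.linear_iff vs.vector_space_axioms)
    ultimately show ?thesis by blast
  next
    case False
    then obtain u v a b c where "quaternion_pair u v" and x: "x = a *s e + b *s u + c *s v"
      using exists_quaternion_pair by blast
    then obtain \<sigma> where \<sigma>: "algebra_aut sc (\<odot>) \<sigma>" "\<sigma> u = g u" "\<sigma> v = g v"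
      using exists_aut_agreeing_on_pair[OF g g_unit] by blast
    interpret \<sigma>: Vector_Spaces.linear sc sc \<sigma> using \<sigma>(1) by (simp add: algebra_aut_def)
    have "\<sigma> x = g x"
      using \<sigma> algebra_aut_unit[OF \<sigma>(1)] g_unit by (simp add: x \<sigma>.add \<sigma>.scale g.add g.scale)
    then show ?thesis using \<sigma>(1) by metis
  qed
qed

end

lemma cayley_algebra_imp_cayley:
  fixes sc :: "'a::field \<Rightarrow> 'v::ab_group_add \<Rightarrow> 'v"
  assumes "cayley_algebra sc mult e n"
  shows "cayley sc mult e n"
proof -
  interpret vs: vector_space sc using assms by (simp add: cayley_algebra_def)
  have "e \<noteq> 0"
  proof
    assume "e = 0"
    have "mult x 0 = 0" for x
      using assms vs.scale_zero_left[of 0] vs.scale_zero_left[of "mult x 0"]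
      unfolding cayley_algebra_def bilinear_map_def Vector_Spaces.linear_iff by metis
    then have "UNIV \<subseteq> vs.span {}" using assms \<open>e = 0\<close> by (auto simp: cayley_algebra_def)
    then have "vs.dim (UNIV :: 'v set) = 0" using vs.dim_le_card[of UNIV "{}"] by simp
    then show False using assms by (simp add: cayley_algebra_def)
  qed
  then show ?thesis
    using assms
    unfolding cayley_def cayley_axioms_def composition_algebra_def composition_algebra_axioms_def
      cayley_algebra_def by blast
qed

theorem theorem3p2:
  fixes sc :: "'a::field \<Rightarrow> 'v::ab_group_add \<Rightarrow> 'v"
    and mult :: "'v \<Rightarrow> 'v \<Rightarrow> 'v" and e :: 'v and n :: "'v \<Rightarrow> 'a"
  assumes "cayley_algebra sc mult e n"
  shows "{\<psi>. local_aut sc mult \<psi>} = {\<phi> \<in> orthogonal_group sc n. \<phi> e = e}"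
proof -
  interpret cayley sc mult e n using assms by (rule cayley_algebra_imp_cayley)
  show ?thesis using local_aut_imp_orthogonal_unital orthogonal_unital_imp_local_aut by blast
qed

end
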